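(* Let $n>5$ with $n\equiv 0\pmod 4$. Over all even $r\in[2,n-2]$, $E(D_n^s[\boldsymbol r,\boldsymbol{n-r}])$ attains its maximum at $r=4$. More precisely: if $\frac n2\equiv 0\pmod 4$, then $E(D_n^s[\boldsymbol r,\boldsymbol{n-r}])$ is strictly decreasing as $r$ runs through $4,8,\dots,\frac n2,\ \frac n2-2,\frac n2-6,\dots,2$ (in this order); if $\frac n2\equiv 2\pmod 4$, then it is strictly decreasing as $r$ runs through $4,8,\dots,\frac n2-2,\ \frac n2,\frac n2-4,\dots,2$.
   Context: A signed digraph (sidigraph) is a digraph in which every arc carries a sign $+1$ or $-1$; its adjacency matrix $A(S)=[a_{ij}]$ has $a_{ij}$ equal to the sign of the arc $w_iw_j$ if it exists and $0$ otherwise. If $\rho_1,\dots,\rho_n$ are the eigenvalues of $A(S)$, the energy of $S$ is $E(S)=\sum_{k=1}^n|\mathrm{Re}(\rho_k)|$. The sign of a directed cycle is the product of the signs of its arcs. For $k\ge 2$, $C_k$ denotes a directed cycle of length $k$ with sign $+1$ and $\boldsymbol{C}_k$ a directed cycle of length $k$ with sign $-1$. It is known that $E(C_k)=2\cot\frac{\pi}{k}$ if $k\equiv0\pmod 4$, $2\csc\frac{\pi}{k}$ if $k\equiv 2\pmod 4$, $\csc\frac{\pi}{2k}$ if $k$ is odd; and $E(\boldsymbol C_k)=2\csc\frac{\pi}{k}$ if $k\equiv0\pmod 4$, $2\cot\frac{\pi}{k}$ if $k\equiv 2\pmod 4$, $\csc\frac{\pi}{2k}$ if $k$ is odd. For integers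 $p,q\ge 2$ with $p+q\le n$, $D_n^s[p,q]$, $D_n^s[\boldsymbol p,\boldsymbol q]$, $D_n^s[\boldsymbol p,q]$, $D_n^s[p,\boldsymbol q]$ denote an $n$-vertex sidigraph whose only directed cycles are two vertex-disjoint cycles of lengths $p$ and $q$ (all other vertices lying on no directed cycle), where a bold entry indicates that the cycle of that length is negative and a non-bold entry that it is positive. Its energy is the sum of the energies of its two cycles, e.g. $E(D_n^s[\boldsymbol p,\boldsymbol q])=E(\boldsymbol C_p)+E(\boldsymbol C_q)$; in particular the order of the two entries does not matter. *)

theory Defs
  imports Complex_Main
begin

text \<open>Energy of a directed cycle of length k with sign -1 (bold C_k), as given
in the paper: 2 csc(pi/k) if k = 0 mod 4, 2 cot(pi/k) if k = 2 mod 4,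
csc(pi/(2k)) if k odd.\<close>
definition neg_cycle_energy :: "nat \<Rightarrow> real" where
  "neg_cycle_energy k =
     (if k mod 4 = 0 then 2 / sin (pi / real k)
      else if k mod 4 = 2 then 2 * cot (pi / real k)
      else 1 / sin (pi / (2 * real k)))"

text \<open>Energy of D_n^s[bold p, bold q]: sum of the energies of its two negative cycles.\<close>
definition energy_D_neg_neg :: "nat \<Rightarrow> nat \<Rightarrow> nat \<Rightarrow> real" where
  "energy_D_neg_neg n p q = neg_cycle_energy p + neg_cycle_energy q"

end

theory Submission
  imports Defs
begin

text \<open>
  By the energy formulas, a negative r-cycle with r = 0 (mod 4) contributes 2 csc(pi/r) and one
  with r = 2 (mod 4) contributes 2 cot(pi/r); since 4 divides n, r and n - r have the same residue.
  On (1, infinity) the function x \<mapsto> csc(pi/x) is strictly convex and x \<mapsto> cot(pi/x) strictly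
  concave: with t = pi/x their derivatives are (t^2 cos t / sin^2 t)/pi and (t / sin t)^2/pi,
  which are monotone in t on (0, pi). Hence csc(pi/r) + csc(pi/(n-r)) strictly decreases as
  r = 0 (mod 4) moves from 4 towards n/2, and cot(pi/r) + cot(pi/(n-r)) strictly increases as
  r = 2 (mod 4) moves from 2 towards n/2. The two chains are linked in the middle by cot < csc
  together with one more convexity (resp. concavity) step.
\<close>

lemma mult_cos_less_sin:
  assumes "0 < s" "s \<le> pi"
  shows "s * cos s < sin s"
proof -
  have "(\<lambda>x. sin x - x * cos x) 0 < (\<lambda>x. sin x - x * cos x) s"
  proof (rule DERIV_pos_imp_increasing_open[OF assms(1)])
    fix x assume x: "0 < x" "x < s"
    have "DERIV (\<lambda>x. sin x - x * cos x) x :> x * sin x"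
      by (auto intro!: derivative_eq_intros)
    moreover have "x * sin x > 0"
      using x assms by (intro mult_pos_pos sin_gt_zero) auto
    ultimately show "\<exists>y. DERIV (\<lambda>x. sin x - x * cos x) x :> y \<and> y > 0" by blast
  qed (intro continuous_intros)
  then show ?thesis by simp
qed

lemma two_sin_cos_less:
  assumes "0 < s" "s \<le> pi"
  shows "2 * sin s * cos s < s * (1 + (cos s)\<^sup>2)"
proof -
  let ?w = "\<lambda>x. x * (1 + (cos x)\<^sup>2) - 2 * sin x * cos x"
  have "?w 0 < ?w s"
  proof (rule DERIV_pos_imp_increasing_open[OF assms(1)])
    fix x assume x: "0 < x" "x < s"
    have "DERIV ?w x :> sin x * (sin x + 2 * (sin x - x * cos x))"
      by (auto intro!: derivative_eq_intros
          simp: algebra_simps power2_eq_square cos_squared_eq[symmetric])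
    moreover have "sin x * (sin x + 2 * (sin x - x * cos x)) > 0"
      using x assms mult_cos_less_sin[of x] by (intro mult_pos_pos add_pos_pos sin_gt_zero) auto
    ultimately show "\<exists>y. DERIV ?w x :> y \<and> y > 0" by blast
  qed (intro continuous_intros)
  then show ?thesis by simp
qed

lemma sq_mult_cos_div_sin_sq_decreasing:
  assumes "0 < s" "s < u" "u < pi"
  shows "u\<^sup>2 * cos u / (sin u)\<^sup>2 < s\<^sup>2 * cos s / (sin s)\<^sup>2"
proof (rule DERIV_neg_imp_decreasing[OF assms(2)])
  fix x assume x: "s \<le> x" "x \<le> u"
  have sx: "sin x > 0" using x assms by (intro sin_gt_zero) auto
  have "DERIV (\<lambda>x. x\<^sup>2 * cos x / (sin x)\<^sup>2) x :>
      x * (2 * sin x * cos x - x * ((sin x)\<^sup>2 + 2 * (cos x)\<^sup>2)) / (sin x)^3"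
    using sx by (auto intro!: derivative_eq_intros
        simp: field_simps power2_eq_square power3_eq_cube)
  moreover have "(sin x)\<^sup>2 + 2 * (cos x)\<^sup>2 = 1 + (cos x)\<^sup>2"
    by (simp add: sin_squared_eq)
  moreover have "x * (2 * sin x * cos x - x * (1 + (cos x)\<^sup>2)) / (sin x)^3 < 0"
    using two_sin_cos_less[of x] x assms sx by (intro divide_neg_pos mult_pos_neg) auto
  ultimately show "\<exists>y. DERIV (\<lambda>x. x\<^sup>2 * cos x / (sin x)\<^sup>2) x :> y \<and> y < 0" by auto
qed

lemma div_sin_increasing:
  assumes "0 < s" "s < u" "u < pi"
  shows "s / sin s < u / sin u"
proof (rule DERIV_pos_imp_increasing[OF assms(2)])
  fix x assume x: "s \<le> x" "x \<le> u"
  have sx: "sin x > 0" using x assms by (intro sin_gt_zero) auto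
  have "DERIV (\<lambda>x. x / sin x) x :> (sin x - x * cos x) / (sin x)\<^sup>2"
    using sx by (auto intro!: derivative_eq_intros simp: power2_eq_square)
  moreover have "(sin x - x * cos x) / (sin x)\<^sup>2 > 0"
    using mult_cos_less_sin[of x] x assms sx by simp
  ultimately show "\<exists>y. DERIV (\<lambda>x. x / sin x) x :> y \<and> y > 0" by blast
qed

lemma increments_less_of_deriv_strict_mono:
  fixes f f' :: "real \<Rightarrow> real"
  assumes der: "\<And>x. lo < x \<Longrightarrow> (f has_real_derivative f' x) (at x)"
    and mono: "\<And>x y. lo < x \<Longrightarrow> x < y \<Longrightarrow> f' x < f' y"
    and "lo < x" "0 < d" "x + d \<le> y"
  shows "f (x + d) - f x < f (y + d) - f y"
proof -
  obtain z1 where z1: "x < z1" "z1 < x + d" "f (x + d) - f x = d * f' z1"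
    using MVT2[of x "x + d" f f'] der assms by auto
  obtain z2 where z2: "y < z2" "f (y + d) - f y = d * f' z2"
    using MVT2[of y "y + d" f f'] der assms by auto
  have "f' z1 < f' z2" using mono z1 z2 assms by simp
  then show ?thesis using z1 z2 assms by simp
qed

definition csc_pi_div :: "real \<Rightarrow> real" where
  "csc_pi_div x = 1 / sin (pi / x)"

lemma pi_div_bounds:
  assumes "1 < x"
  shows "0 < pi / x" "pi / x < pi" "0 < sin (pi / x)"
proof -
  show "0 < pi / x" "pi / x < pi" using assms by (simp_all add: divide_less_eq)
  then show "0 < sin (pi / x)" by (rule sin_gt_zero)
qed

lemma DERIV_csc_pi_div:
  assumes "1 < x"
  shows "DERIV csc_pi_div x :> (pi / x)\<^sup>2 * cos (pi / x) / (sin (pi / x))\<^sup>2 / pi"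
  unfolding csc_pi_div_def[abs_def] using assms pi_div_bounds[OF assms]
  by (auto intro!: derivative_eq_intros simp: field_simps power2_eq_square)

lemma DERIV_cot_pi_div:
  assumes "1 < x"
  shows "DERIV (\<lambda>x. cot (pi / x)) x :> ((pi / x) / sin (pi / x))\<^sup>2 / pi"
proof -
  have "sin (pi / x) \<noteq> 0" using pi_div_bounds[OF assms] by simp
  moreover have "DERIV (\<lambda>x. pi / x) x :> - pi / x\<^sup>2"
    using assms by (auto intro!: derivative_eq_intros simp: power2_eq_square)
  ultimately have "DERIV (\<lambda>x. cot (pi / x)) x :> - inverse ((sin (pi / x))\<^sup>2) * (- pi / x\<^sup>2)"
    by (rule DERIV_chain2[OF DERIV_cot])
  then show ?thesis using assms by (simp add: field_simps power2_eq_square)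
qed

lemma csc_pi_div_increments_increasing:
  assumes "1 < x" "0 < d" "x + d \<le> y"
  shows "csc_pi_div (x + d) - csc_pi_div x < csc_pi_div (y + d) - csc_pi_div y"
proof (rule increments_less_of_deriv_strict_mono[OF DERIV_csc_pi_div _ assms])
  fix x y :: real assume "1 < x" "x < y"
  then have "(pi / x)\<^sup>2 * cos (pi / x) / (sin (pi / x))\<^sup>2
      < (pi / y)\<^sup>2 * cos (pi / y) / (sin (pi / y))\<^sup>2"
    using pi_div_bounds[of x] pi_div_bounds[of y]
    by (intro sq_mult_cos_div_sin_sq_decreasing) (auto simp: frac_less2)
  then show "(pi / x)\<^sup>2 * cos (pi / x) / (sin (pi / x))\<^sup>2 / pi
      < (pi / y)\<^sup>2 * cos (pi / y) / (sin (pi / y))\<^sup>2 / pi"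
    by (rule divide_strict_right_mono) simp
qed

lemma cot_pi_div_increments_decreasing:
  assumes "1 < x" "0 < d" "x + d \<le> y"
  shows "cot (pi / (y + d)) - cot (pi / y) < cot (pi / (x + d)) - cot (pi / x)"
proof -
  have "(\<lambda>x. - cot (pi / x)) (x + d) - (\<lambda>x. - cot (pi / x)) x
      < (\<lambda>x. - cot (pi / x)) (y + d) - (\<lambda>x. - cot (pi / x)) y"
  proof (rule increments_less_of_deriv_strict_mono[OF DERIV_minus[OF DERIV_cot_pi_div] _ assms])
    fix x y :: real assume "1 < x" "x < y"
    then have "(pi / y) / sin (pi / y) < (pi / x) / sin (pi / x)"
      using pi_div_bounds[of x] pi_div_bounds[of y]
      by (intro div_sin_increasing) (auto simp: frac_less2)
    moreover have "0 < (pi / y) / sin (pi / y)"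
      using pi_div_bounds[of y] \<open>1 < x\<close> \<open>x < y\<close> by simp
    ultimately show "- (((pi / x) / sin (pi / x))\<^sup>2 / pi) < - (((pi / y) / sin (pi / y))\<^sup>2 / pi)"
      by (simp add: divide_strict_right_mono power_strict_mono)
  qed
  then show ?thesis by simp
qed

lemma cot_pi_div_less_csc_pi_div:
  assumes "1 < x"
  shows "cot (pi / x) < csc_pi_div x"
proof -
  have "cos (pi / x) < cos 0"
    using pi_div_bounds[OF assms] by (intro cos_monotone_0_pi) auto
  then show ?thesis
    using pi_div_bounds[OF assms] by (simp add: cot_def csc_pi_div_def divide_strict_right_mono)
qed

lemma neg_cycle_energy_mod4_0: "k mod 4 = 0 \<Longrightarrow> neg_cycle_energy k = 2 * csc_pi_div k"
  by (simp add: neg_cycle_energy_def csc_pi_div_def)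

lemma neg_cycle_energy_mod4_2: "k mod 4 = 2 \<Longrightarrow> neg_cycle_energy k = 2 * cot (pi / k)"
  by (simp add: neg_cycle_energy_def)

abbreviation energy_split :: "nat \<Rightarrow> nat \<Rightarrow> real" where
  "energy_split n r \<equiv> energy_D_neg_neg n r (n - r)"

lemma energy_split_sym: "r \<le> n \<Longrightarrow> energy_split n (n - r) = energy_split n r"
  by (simp add: energy_D_neg_neg_def)

lemma diff_mod4_eq:
  assumes "(n::nat) mod 4 = 0" "r \<le> n"
  shows "(n - r) mod 4 = (4 - r mod 4) mod 4"
proof -
  have "((n - r) mod 4 + r mod 4) mod 4 = 0"
    using assms by (simp add: mod_add_eq)
  moreover have "(n - r) mod 4 \<in> {0, 1, 2, 3}" "r mod 4 \<in> {0, 1, 2, 3}" by auto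
  ultimately show ?thesis by (elim insertE emptyE) simp_all
qed

lemma energy_split_mod4_0:
  assumes "n mod 4 = 0" "r mod 4 = 0" "r \<le> n"
  shows "energy_split n r = 2 * csc_pi_div r + 2 * csc_pi_div (real n - real r)"
  using assms diff_mod4_eq[of n r]
  by (simp add: energy_D_neg_neg_def neg_cycle_energy_mod4_0)

lemma energy_split_mod4_2:
  assumes "n mod 4 = 0" "r mod 4 = 2" "r \<le> n"
  shows "energy_split n r = 2 * cot (pi / r) + 2 * cot (pi / (real n - real r))"
  using assms diff_mod4_eq[of n r]
  by (simp add: energy_D_neg_neg_def neg_cycle_energy_mod4_2)

lemma energy_split_mod4_0_step:
  assumes "n mod 4 = 0" "r mod 4 = 0" "0 < r" "2 * (r + 4) \<le> n"
  shows "energy_split n (r + 4) < energy_split n r"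
proof -
  have "csc_pi_div (real r + 4) - csc_pi_div (real r)
      < csc_pi_div ((real n - real r - 4) + 4) - csc_pi_div (real n - real r - 4)"
    using assms by (intro csc_pi_div_increments_increasing) auto
  then show ?thesis
    using assms energy_split_mod4_0[of n r] energy_split_mod4_0[of n "r + 4"]
    by (simp add: algebra_simps)
qed

lemma energy_split_mod4_2_step:
  assumes "n mod 4 = 0" "r mod 4 = 2" "2 * (r + 4) \<le> n"
  shows "energy_split n r < energy_split n (r + 4)"
proof -
  have "r \<ge> 2" using assms(2) by presburger
  then have "cot (pi / ((real n - real r - 4) + 4)) - cot (pi / (real n - real r - 4))
      < cot (pi / (real r + 4)) - cot (pi / real r)"
    using assms by (intro cot_pi_div_increments_decreasing) auto
  then show ?thesis
    using assms energy_split_mod4_2[of n r] energy_split_mod4_2[of n "r + 4"]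
    by (simp add: algebra_simps)
qed

lemma four_mult_plus_2_mod4: "(4 * j + 2) mod 4 = (2::nat)"
  by (simp add: mod_Suc)

lemma energy_split_center_8k:
  assumes "n = 8 * k" "0 < k"
  shows "energy_split n (4 * k - 2) < energy_split n (4 * k)"
proof -
  define a where "a = real (4 * k)"
  have a: "4 \<le> a" using assms unfolding a_def by simp
  have "cot (pi / ((a - 2) + 2 + 2)) - cot (pi / ((a - 2) + 2)) < cot (pi / ((a - 2) + 2)) - cot (pi / (a - 2))"
    using a by (intro cot_pi_div_increments_decreasing) auto
  moreover have "cot (pi / a) < csc_pi_div a"
    using a by (intro cot_pi_div_less_csc_pi_div) auto
  moreover have "energy_split n (4 * k) = 4 * csc_pi_div a"
    using assms energy_split_mod4_0[of n "4 * k"] unfolding a_def by simp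
  moreover have "energy_split n (4 * k - 2) = 2 * cot (pi / (a - 2)) + 2 * cot (pi / (a + 2))"
  proof -
    have "4 * k - 2 = 4 * (k - 1) + 2" using assms by simp
    then show ?thesis
      using assms energy_split_mod4_2[of n "4 * k - 2"] four_mult_plus_2_mod4[of "k - 1"]
      unfolding a_def by (simp add: of_nat_diff)
  qed
  ultimately show ?thesis by simp
qed

lemma energy_split_center_8k_plus_4:
  assumes "n = 8 * k + 4" "0 < k"
  shows "energy_split n (4 * k + 2) < energy_split n (4 * k)"
proof -
  define a where "a = real (4 * k + 2)"
  have a: "6 \<le> a" using assms unfolding a_def by simp
  have "csc_pi_div ((a - 2) + 2) - csc_pi_div (a - 2) < csc_pi_div ((a - 2) + 2 + 2) - csc_pi_div ((a - 2) + 2)"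
    using a by (intro csc_pi_div_increments_increasing) auto
  moreover have "cot (pi / a) < csc_pi_div a"
    using a by (intro cot_pi_div_less_csc_pi_div) auto
  moreover have "energy_split n (4 * k + 2) = 4 * cot (pi / a)"
    using assms energy_split_mod4_2[of n "4 * k + 2"] four_mult_plus_2_mod4[of k]
    unfolding a_def by simp
  moreover have "energy_split n (4 * k) = 2 * csc_pi_div (a - 2) + 2 * csc_pi_div (a + 2)"
    using assms energy_split_mod4_0[of n "4 * k"] unfolding a_def by (simp add: add.commute)
  ultimately show ?thesis by simp
qed

lemma successively_map_upt:
  "successively R (map f [m..<n]) \<longleftrightarrow> (\<forall>i. m \<le> i \<longrightarrow> Suc i < n \<longrightarrow> R (f i) (f (Suc i)))"
proof -
  have "(\<forall>i. Suc i < n - m \<longrightarrow> R (f (m + i)) (f (Suc (m + i))))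
      \<longleftrightarrow> (\<forall>i. m \<le> i \<longrightarrow> Suc i < n \<longrightarrow> R (f i) (f (Suc i)))"
    by (metis add.commute le_add2 le_add_diff_inverse2 less_diff_conv add_Suc)
  then show ?thesis by (simp add: successively_conv_nth)
qed

text \<open>
  The values 4, 8, ..., 4k followed by 4j - 2, 4j - 6, ..., 2: the order of the statement
  for j = k when n = 8k, and for j = k + 1 when n = 8k + 4.
\<close>
definition energy_order :: "nat \<Rightarrow> nat \<Rightarrow> nat list" where
  "energy_order k j = map (\<lambda>i. 4 * i) [1..<k + 1] @ map (\<lambda>i. 4 * j - 2 - 4 * i) [0..<j]"

lemma energy_order_sorted:
  assumes "n mod 4 = 0" "0 < k" "0 < j" "8 * k \<le> n" "8 * j \<le> n + 4"
    and center: "energy_split n (4 * j - 2) < energy_split n (4 * k)"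
  shows "sorted_wrt (>) (map (energy_split n) (energy_order k j))"
proof -
  let ?up = "map (\<lambda>i. energy_split n (4 * i)) [1..<k + 1]"
  let ?down = "map (\<lambda>i. energy_split n (4 * j - 2 - 4 * i)) [0..<j]"
  have "successively (>) ?up"
    unfolding successively_map_upt
    using assms energy_split_mod4_0_step[of n "4 * i" for i] by (auto simp: algebra_simps)
  moreover have "successively (>) ?down"
    unfolding successively_map_upt
  proof (intro allI impI)
    fix i assume "Suc i < j"
    define r where "r = 4 * (j - 2 - i) + 2"
    have "4 * j - 2 - 4 * Suc i = r" "4 * j - 2 - 4 * i = r + 4" "2 * (r + 4) \<le> n"
      using \<open>Suc i < j\<close> assms(5) unfolding r_def by auto
    moreover have "r mod 4 = 2" unfolding r_def by (rule four_mult_plus_2_mod4)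
    ultimately show "energy_split n (4 * j - 2 - 4 * Suc i) < energy_split n (4 * j - 2 - 4 * i)"
      using assms(1) energy_split_mod4_2_step by simp
  qed
  moreover have "last ?up = energy_split n (4 * k)"
    using assms(2) by (simp add: last_map)
  moreover have "hd ?down = energy_split n (4 * j - 2)"
    using assms(3) by (simp only: upt_conv_Cons list.map list.sel mult_zero_right diff_zero)
  moreover have "map (energy_split n) (energy_order k j) = ?up @ ?down"
    by (simp add: energy_order_def)
  ultimately have "successively (>) (map (energy_split n) (energy_order k j))"
    using center by (simp only: successively_append_iff) simp
  then show ?thesis by (simp add: successively_conv_sorted_wrt)
qed

lemma even_mod4_cases:
  assumes "even (r::nat)"
  obtains q where "r = 4 * q" | q where "r = 4 * q + 2"
proof -
  obtain t where t: "r = 2 * t" using assms by blast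
  have "r = 4 * (t div 2) + 2 * (t mod 2)" using t div_mult_mod_eq[of t 2] by linarith
  moreover have "t mod 2 = 0 \<or> t mod 2 = 1" by auto
  ultimately show ?thesis using that by auto
qed

lemma mem_energy_order:
  assumes "even r" "2 \<le> r" "r < 4 * k + 4" "r < 4 * j + 2"
  shows "r \<in> set (energy_order k j)"
  using assms(1)
proof (cases rule: even_mod4_cases)
  case (1 q)
  then have "q \<in> set [1..<k + 1]" using assms by auto
  then show ?thesis unfolding energy_order_def 1 by auto
next
  case (2 q)
  then have "r = 4 * j - 2 - 4 * (j - 1 - q)" "j - 1 - q \<in> set [0..<j]" using assms by auto
  then show ?thesis unfolding energy_order_def by (auto simp del: set_upt)
qed

lemma energy_order_Cons: "0 < k \<Longrightarrow> \<exists>rs. energy_order k j = 4 # rs"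
  by (simp add: energy_order_def upt_conv_Cons del: upt_Suc)

lemma energy_split_le_energy_split_4:
  assumes sorted: "sorted_wrt (>) (map (energy_split n) (energy_order k j))"
    and "even n" "0 < k" "n < 8 * k + 8" "n < 8 * j + 4"
    and "even r" "2 \<le> r" "r \<le> n - 2"
  shows "energy_split n r \<le> energy_split n 4"
proof -
  define s where "s = min r (n - r)"
  have "energy_split n r = energy_split n s"
    using assms energy_split_sym[of r n] unfolding s_def by (auto simp: min_def)
  moreover have "s \<in> set (energy_order k j)"
    using assms unfolding s_def by (intro mem_energy_order) (auto simp: min_def)
  moreover obtain rs where "energy_order k j = 4 # rs"
    using energy_order_Cons[OF assms(3)] by blast
  ultimately show ?thesis using sorted by auto
qed

theorem lemma3p7:
  fixes n :: nat
  assumes "n > 5" and "n mod 4 = 0"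
  shows "(\<forall>r. even r \<and> 2 \<le> r \<and> r \<le> n - 2 \<longrightarrow>
            energy_D_neg_neg n r (n - r) \<le> energy_D_neg_neg n 4 (n - 4))
    \<and> ((n div 2) mod 4 = 0 \<longrightarrow>
         sorted_wrt (>) (map (\<lambda>r. energy_D_neg_neg n r (n - r))
           (map (\<lambda>i. 4 * i) [1..<n div 8 + 1] @ map (\<lambda>i. n div 2 - 2 - 4 * i) [0..<n div 8])))
    \<and> ((n div 2) mod 4 = 2 \<longrightarrow>
         sorted_wrt (>) (map (\<lambda>r. energy_D_neg_neg n r (n - r))
           (map (\<lambda>i. 4 * i) [1..<n div 8 + 1] @ map (\<lambda>i. n div 2 - 4 * i) [0..<n div 8 + 1])))"
proof -
  define k where "k = n div 8"
  have "n = 8 * k \<or> n = 8 * k + 4" "0 < k"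
    using assms unfolding k_def by presburger+
  then consider (eight) "n = 8 * k" | (eight_plus_4) "n = 8 * k + 4" by blast
  then show ?thesis
  proof cases
    case eight
    then have sorted: "sorted_wrt (>) (map (energy_split n) (energy_order k k))"
      using \<open>0 < k\<close> by (intro energy_order_sorted energy_split_center_8k) auto
    have "n div 2 = 4 * k" using eight by simp
    then show ?thesis
      using energy_split_le_energy_split_4[OF sorted] sorted eight \<open>0 < k\<close>
      unfolding energy_order_def k_def[symmetric] by simp
  next
    case eight_plus_4
    have "4 * (k + 1) - 2 = 4 * k + 2" by simp
    then have sorted: "sorted_wrt (>) (map (energy_split n) (energy_order k (k + 1)))"
      using eight_plus_4 \<open>0 < k\<close> energy_split_center_8k_plus_4
      by (intro energy_order_sorted) auto
    have "n div 2 = 4 * k + 2" using eight_plus_4 by simp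
    then show ?thesis
      using energy_split_le_energy_split_4[OF sorted] sorted eight_plus_4 \<open>0 < k\<close>
        four_mult_plus_2_mod4[of k]
      unfolding energy_order_def k_def[symmetric] by simp
  qed
qed

end
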